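(* Let $V$ be a Banach space densely and continuously embedded in a Banach space $E$, $P$ a metric space, and for each $\mu\in P$ let $\{A^{(\mu)}(t)\}_{t\geq0}$ be a family of linear operators in $E$ with $V\subset D(A^{(\mu)}(t))$, $A^{(\mu)}(t)\in\mathcal L(V,E)$ and $t\mapsto A^{(\mu)}(t)\in\mathcal L(V,E)$ continuous. For each $\mu\in P$ let $\widehat A^{(\mu)}$ be a linear operator in $E$ with $V\subset D(\widehat A^{(\mu)})$, and assume $\lim_{T\to+\infty,\ \nu\to\mu}\frac1T\int_0^T\|A^{(\nu)}(t+h)-\widehat A^{(\mu)}\|_{\mathcal L(V,E)}\,dt=0$ uniformly with respect to $h\geq0$, for every $\mu\in P$. Set $A^{(\nu,\lambda)}(r):=A^{(\nu)}(r/\lambda)$ for $\lambda>0$. Then for any $\mu\in P$ and $t\geq s\geq0$, $\lim_{\lambda\to0^+,\ \nu\to\mu}\int_s^t\|A^{(\nu,\lambda)}(r)-\widehat A^{(\mu)}\|_{\mathcal L(V,E)}\,dr=0$.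
   Context: $\|\cdot\|_{\mathcal L(V,E)}$ denotes the operator norm of the restriction to $V$ of the operator, as a map from $V$ to $E$. *)

theory Defs
  imports "HOL-Analysis.Analysis"
begin

text \<open>Operator norm in L(V,E) of a (possibly unbounded) linear map from V to E,
  valued in [0,\<infinity>] (it is \<infinity> when the map is unbounded on the unit ball of V).\<close>
definition opnormVE :: "('v::real_normed_vector \<Rightarrow> 'e::real_normed_vector) \<Rightarrow> ennreal" where
  "opnormVE f = (SUP v\<in>{v. norm v \<le> 1}. ennreal (norm (f v)))"

definition rescaled :: "('p \<Rightarrow> real \<Rightarrow> 'a) \<Rightarrow> 'p \<Rightarrow> real \<Rightarrow> real \<Rightarrow> 'a" where
  "rescaled A \<nu> l r = A \<nu> (r / l)"

end

theory Submission
  imports Defs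
begin

text \<open>If \<open>Ahat \<mu>\<close> were unbounded, every integrand in the hypothesis would be \<open>\<infinity>\<close>; so it is
  bounded and the integrand becomes \<open>\<parallel>A \<nu> (r / l) - Ahat \<mu>\<parallel>\<close>. Substituting \<open>r = s + l x\<close> turns its
  integral over \<open>[s, t]\<close> into \<open>t - s\<close> times the average of \<open>\<parallel>A \<nu> (x + s / l) - Ahat \<mu>\<parallel>\<close> over
  \<open>[0, T]\<close>, where \<open>T = (t - s) / l \<rightarrow> \<infinity>\<close> as \<open>l \<rightarrow> 0\<^sup>+\<close>. The shift \<open>s / l\<close> is nonnegative, so the
  hypothesis, being uniform in the shift, makes this average small for \<open>T\<close> large and \<open>\<nu>\<close> near \<open>\<mu>\<close>.\<close>

lemma norm_le_opnormVE:
  assumes lin: "linear h" and le: "opnormVE h \<le> ennreal c" and c: "0 \<le> c"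
  shows "norm (h x) \<le> c * norm x"
proof (cases "x = 0")
  case True
  then show ?thesis using lin by (simp add: linear_0)
next
  case False
  let ?u = "x /\<^sub>R norm x"
  have "ennreal (norm (h ?u)) \<le> opnormVE h"
    unfolding opnormVE_def using False by (intro SUP_upper) auto
  then have "ennreal (norm (h ?u)) \<le> ennreal c" using le by (rule order_trans)
  then have "norm (h ?u) \<le> c" using c by simp
  moreover have "h ?u = h x /\<^sub>R norm x" using lin by (simp add: linear_scale)
  ultimately show ?thesis using False by (simp add: field_simps)
qed

lemma bounded_linear_if_opnormVE_finite:
  assumes lin: "linear h" and fin: "opnormVE h \<noteq> \<infinity>"
  shows "bounded_linear h"
proof -
  obtain c where c: "opnormVE h = ennreal c" "0 \<le> c"
    using fin by (cases "opnormVE h") auto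
  show ?thesis
  proof (rule bounded_linear_intro[where K = c])
    show "h (x + y) = h x + h y" and "h (r *\<^sub>R x) = r *\<^sub>R h x" for x y r
      using lin by (simp_all add: linear_add linear_scale)
    show "norm (h x) \<le> norm x * c" for x
      using norm_le_opnormVE[OF lin _ c(2), of x] c(1) by (simp add: mult.commute)
  qed
qed

lemma opnormVE_blinfun:
  fixes g :: "'v::real_normed_vector \<Rightarrow>\<^sub>L 'e::real_normed_vector"
  shows "opnormVE (blinfun_apply g) = ennreal (norm g)"
proof (rule antisym)
  show le: "opnormVE (blinfun_apply g) \<le> ennreal (norm g)"
    unfolding opnormVE_def
  proof (rule SUP_least)
    fix v :: 'v assume "v \<in> {v. norm v \<le> 1}"
    then have "norm (g v) \<le> norm g"
      using norm_blinfun[of g v] mult_left_le[of "norm v" "norm g"] by simp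
    then show "ennreal (norm (g v)) \<le> ennreal (norm g)" by (rule ennreal_leI)
  qed
  obtain c where c: "opnormVE (blinfun_apply g) = ennreal c" "0 \<le> c"
    using le by (cases "opnormVE (blinfun_apply g)") (auto simp: top_unique)
  have "norm g \<le> c"
    using c norm_le_opnormVE[OF bounded_linear.linear[OF blinfun.bounded_linear_right], of g]
    by (intro norm_blinfun_bound) auto
  then show "ennreal (norm g) \<le> opnormVE (blinfun_apply g)" using c by simp
qed

lemma bounded_linear_if_average_bounded:
  fixes g :: "'p \<Rightarrow> real \<Rightarrow> ('v::real_normed_vector \<Rightarrow>\<^sub>L 'e::real_normed_vector)"
  assumes lin: "linear f" and G: "G \<noteq> bot"
    and avg: "\<forall>\<^sub>F (T, \<nu>) in at_top \<times>\<^sub>F G.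
      ennreal (1 / T) * (\<integral>\<^sup>+ t\<in>{0..T}. opnormVE (\<lambda>v. g \<nu> t v - f v) \<partial>lborel) \<le> ennreal c"
  shows "bounded_linear f"
proof (rule ccontr)
  assume unbounded: "\<not> bounded_linear f"
  have top: "opnormVE (\<lambda>v. g \<nu> t v - f v) = \<infinity>" for \<nu> t
  proof (rule ccontr)
    assume "opnormVE (\<lambda>v. g \<nu> t v - f v) \<noteq> \<infinity>"
    then have "bounded_linear (\<lambda>v. g \<nu> t v - f v)"
      using lin by (intro bounded_linear_if_opnormVE_finite linear_compose_sub
          bounded_linear.linear[OF blinfun.bounded_linear_right])
    from bounded_linear_sub[OF blinfun.bounded_linear_right[of "g \<nu> t"] this] unbounded
    show False by simp
  qed
  have "\<forall>\<^sub>F (T, \<nu>) in at_top \<times>\<^sub>F G. (0::real) < T"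
    using eventually_prodI[OF eventually_gt_at_top[of 0] eventually_True[of G]]
    by (simp add: split_def)
  from eventually_happens'[OF _ eventually_conj[OF avg this]] G
  obtain T \<nu> where T: "0 < T" and
    bound: "ennreal (1 / T) * (\<integral>\<^sup>+ t\<in>{0..T}. opnormVE (\<lambda>v. g \<nu> t v - f v) \<partial>lborel) \<le> ennreal c"
    by (auto simp: prod_filter_eq_bot)
  have "ennreal (1 / T) * (\<integral>\<^sup>+ t\<in>{0..T}. opnormVE (\<lambda>v. g \<nu> t v - f v) \<partial>lborel)
      = ennreal (1 / T) * (\<infinity> * emeasure lborel {0..T})"
    unfolding top by (subst nn_integral_cmult_indicator) simp_all
  also have "\<dots> = \<infinity>" using T by (simp add: ennreal_top_mult ennreal_mult_top)
  finally show False using bound by (simp add: top_unique)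
qed

lemma rescaled_integral_eq_average:
  fixes F :: "real \<Rightarrow> ennreal"
  assumes F: "F \<in> borel_measurable borel" and l: "0 < l" and st: "s < t"
  defines "T \<equiv> (t - s) / l"
  shows "(\<integral>\<^sup>+ r\<in>{s..t}. F (r / l) \<partial>lborel)
    = ennreal (t - s) * (ennreal (1 / T) * (\<integral>\<^sup>+ x\<in>{0..T}. F (x + s / l) \<partial>lborel))"
proof -
  have [measurable]: "F \<in> borel_measurable borel" by (fact F)
  have "(\<integral>\<^sup>+ r\<in>{s..t}. F (r / l) \<partial>lborel)
      = ennreal l * (\<integral>\<^sup>+ x. F ((s + l * x) / l) * indicator {s..t} (s + l * x) \<partial>lborel)"
    using nn_integral_real_affine[of "\<lambda>r. F (r / l) * indicator {s..t} r" l s] l by simp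
  also have "(\<lambda>x. F ((s + l * x) / l) * indicator {s..t} (s + l * x))
      = (\<lambda>x. F (x + s / l) * indicator {0..T} x)"
    using l by (auto simp: T_def indicator_def field_simps zero_le_mult_iff fun_eq_iff)
  also have "ennreal l = ennreal (t - s) * ennreal (1 / T)"
    using l st by (simp add: T_def ennreal_mult[symmetric])
  finally show ?thesis by (simp add: mult.assoc)
qed

lemma ennreal_tendsto_0I:
  fixes f :: "'a \<Rightarrow> ennreal"
  assumes "\<And>\<epsilon>. 0 < \<epsilon> \<Longrightarrow> \<forall>\<^sub>F x in F. f x \<le> ennreal \<epsilon>"
  shows "(f \<longlongrightarrow> 0) F"
proof (rule order_tendstoI)
  fix a :: ennreal assume "0 < a"
  then obtain b where "0 < b" "b < a" using dense by blast
  then obtain \<epsilon> where "b = ennreal \<epsilon>" "0 < \<epsilon>"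
    by (cases b) (auto simp: top_unique)
  with \<open>b < a\<close> show "\<forall>\<^sub>F x in F. f x < a"
    using assms[OF \<open>0 < \<epsilon>\<close>] by (auto elim!: eventually_mono intro: le_less_trans)
qed simp

lemma tendsto_rescaled_integral_0:
  fixes F :: "'p \<Rightarrow> real \<Rightarrow> ennreal"
  assumes meas: "\<And>\<nu>. F \<nu> \<in> borel_measurable borel"
    and avg: "\<And>\<epsilon>. 0 < \<epsilon> \<Longrightarrow> \<forall>\<^sub>F (T, \<nu>) in at_top \<times>\<^sub>F G. \<forall>h\<ge>0.
      ennreal (1 / T) * (\<integral>\<^sup>+ x\<in>{0..T}. F \<nu> (x + h) \<partial>lborel) \<le> ennreal \<epsilon>"
    and s: "0 \<le> s" and st: "s \<le> t"
  shows "((\<lambda>(l, \<nu>). \<integral>\<^sup>+ r\<in>{s..t}. F \<nu> (r / l) \<partial>lborel) \<longlongrightarrow> 0) (at_right 0 \<times>\<^sub>F G)"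
proof (cases "s = t")
  case True
  then show ?thesis by (simp add: split_def)
next
  case False
  with st have st: "s < t" by simp
  show ?thesis
  proof (rule ennreal_tendsto_0I)
    fix \<epsilon> :: real assume "0 < \<epsilon>"
    with st have "0 < \<epsilon> / (t - s)" by simp
    from avg[OF this] obtain P Q where
      P: "eventually P at_top" and Q: "eventually Q G" and
      PQ: "\<And>T \<nu>. P T \<Longrightarrow> Q \<nu> \<Longrightarrow> \<forall>h\<ge>0.
        ennreal (1 / T) * (\<integral>\<^sup>+ x\<in>{0..T}. F \<nu> (x + h) \<partial>lborel) \<le> ennreal (\<epsilon> / (t - s))"
      unfolding eventually_prod_filter by auto
    have "filterlim (\<lambda>l. (t - s) * inverse l) at_top (at_right 0)"
      using st
      by (intro filterlim_tendsto_pos_mult_at_top[OF tendsto_const _ filterlim_inverse_at_top_right])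
        simp
    with P have "\<forall>\<^sub>F l in at_right 0. P ((t - s) / l)"
      by (simp add: filterlim_iff divide_inverse)
    then have "\<forall>\<^sub>F l in at_right 0. 0 < l \<and> P ((t - s) / l)"
      using eventually_at_right_less by (rule eventually_conj[rotated])
    from eventually_prodI[OF this Q]
    have ev: "\<forall>\<^sub>F (l, \<nu>) in at_right 0 \<times>\<^sub>F G. 0 < l \<and> P ((t - s) / l) \<and> Q \<nu>"
      by (simp add: split_def)
    have bound: "(\<integral>\<^sup>+ r\<in>{s..t}. F \<nu> (r / l) \<partial>lborel) \<le> ennreal \<epsilon>"
      if l: "0 < l" and "P ((t - s) / l)" and "Q \<nu>" for l \<nu>
    proof -
      have "0 \<le> s / l" using s l by simp
      with that have "ennreal (1 / ((t - s) / l))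
          * (\<integral>\<^sup>+ x\<in>{0..(t - s) / l}. F \<nu> (x + s / l) \<partial>lborel) \<le> ennreal (\<epsilon> / (t - s))"
        using PQ by blast
      then have "(\<integral>\<^sup>+ r\<in>{s..t}. F \<nu> (r / l) \<partial>lborel) \<le> ennreal (t - s) * ennreal (\<epsilon> / (t - s))"
        unfolding rescaled_integral_eq_average[OF meas l st] by (rule mult_left_mono) simp
      also have "\<dots> = ennreal \<epsilon>"
        using st \<open>0 < \<epsilon>\<close> by (simp add: ennreal_mult[symmetric])
      finally show ?thesis .
    qed
    show "\<forall>\<^sub>F x in at_right 0 \<times>\<^sub>F G.
        (case x of (l, \<nu>) \<Rightarrow> \<integral>\<^sup>+ r\<in>{s..t}. F \<nu> (r / l) \<partial>lborel) \<le> ennreal \<epsilon>"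
      using ev by (rule eventually_mono) (auto intro: bound)
  qed
qed

lemma tendsto_rescaled_norm_integral_0:
  fixes A :: "'p \<Rightarrow> real \<Rightarrow> 'a::real_normed_vector"
  assumes cont: "\<And>\<nu>. continuous_on {0..} (A \<nu>)"
    and avg: "\<And>\<epsilon>. 0 < \<epsilon> \<Longrightarrow> \<forall>\<^sub>F (T, \<nu>) in at_top \<times>\<^sub>F G. \<forall>h\<ge>0.
      ennreal (1 / T) * (\<integral>\<^sup>+ x\<in>{0..T}. ennreal (norm (A \<nu> (x + h))) \<partial>lborel) \<le> ennreal \<epsilon>"
    and s: "0 \<le> s" and st: "s \<le> t"
  shows "((\<lambda>(l, \<nu>). \<integral>\<^sup>+ r\<in>{s..t}. ennreal (norm (A \<nu> (r / l))) \<partial>lborel) \<longlongrightarrow> 0)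
    (at_right 0 \<times>\<^sub>F G)"
proof -
  \<comment> \<open>Extending \<open>A \<nu>\<close> to the left by \<open>A \<nu> 0\<close> makes the integrand globally measurable.\<close>
  define F where "F \<nu> r = ennreal (norm (A \<nu> (max 0 r)))" for \<nu> r
  have "F \<nu> \<in> borel_measurable borel" for \<nu>
  proof -
    have "continuous_on UNIV (\<lambda>r. A \<nu> (max 0 r))"
      by (rule continuous_on_compose2[OF cont]) (auto intro!: continuous_intros)
    then have "continuous_on UNIV (\<lambda>r. norm (A \<nu> (max 0 r)))"
      by (rule continuous_on_norm)
    then show ?thesis
      unfolding F_def
      by (rule measurable_compose[OF borel_measurable_continuous_onI measurable_ennreal])
  qed
  moreover have "\<forall>\<^sub>F (T, \<nu>) in at_top \<times>\<^sub>F G. \<forall>h\<ge>0.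
      ennreal (1 / T) * (\<integral>\<^sup>+ x\<in>{0..T}. F \<nu> (x + h) \<partial>lborel) \<le> ennreal \<epsilon>" if "0 < \<epsilon>" for \<epsilon>
  proof -
    have "(\<integral>\<^sup>+ x\<in>{0..T}. F \<nu> (x + h) \<partial>lborel)
        = (\<integral>\<^sup>+ x\<in>{0..T}. ennreal (norm (A \<nu> (x + h))) \<partial>lborel)" if "0 \<le> h" for T \<nu> h
      using that by (intro nn_integral_cong) (simp add: F_def indicator_def)
    with avg[OF \<open>0 < \<epsilon>\<close>] show ?thesis by simp
  qed
  ultimately have "((\<lambda>(l, \<nu>). \<integral>\<^sup>+ r\<in>{s..t}. F \<nu> (r / l) \<partial>lborel) \<longlongrightarrow> 0) (at_right 0 \<times>\<^sub>F G)"
    using s st by (rule tendsto_rescaled_integral_0)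
  moreover have "\<forall>\<^sub>F x in at_right 0 \<times>\<^sub>F G.
      (case x of (l, \<nu>) \<Rightarrow> \<integral>\<^sup>+ r\<in>{s..t}. F \<nu> (r / l) \<partial>lborel)
      = (case x of (l, \<nu>) \<Rightarrow> \<integral>\<^sup>+ r\<in>{s..t}. ennreal (norm (A \<nu> (r / l))) \<partial>lborel)"
    using eventually_prodI[OF eventually_at_right_less eventually_True[of G]]
    by (rule eventually_mono) (use s in \<open>auto intro!: nn_integral_cong simp: F_def indicator_def\<close>)
  ultimately show ?thesis
    by (rule Lim_transform_eventually)
qed

theorem lemma3p4:
  fixes j :: "'v::banach \<Rightarrow>\<^sub>L 'e::banach"
    and A :: "'p::metric_space \<Rightarrow> real \<Rightarrow> ('v \<Rightarrow>\<^sub>L 'e)"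
    and Ahat :: "'p \<Rightarrow> 'v \<Rightarrow> 'e"
  assumes j_inj: "inj (blinfun_apply j)"
    and j_dense: "closure (range (blinfun_apply j)) = UNIV"
    and A_cont: "\<And>\<mu>. continuous_on {0..} (A \<mu>)"
    and Ahat_lin: "\<And>\<mu>. linear (Ahat \<mu>)"
    and avg: "\<And>\<mu> \<epsilon>. \<epsilon> > 0 \<Longrightarrow>
       \<forall>\<^sub>F (T, \<nu>) in at_top \<times>\<^sub>F nhds \<mu>. \<forall>h\<ge>0.
          ennreal (1 / T) * (\<integral>\<^sup>+ t\<in>{0..T}. opnormVE (\<lambda>v. A \<nu> (t + h) v - Ahat \<mu> v) \<partial>lborel)
            \<le> ennreal \<epsilon>"
    and "0 \<le> s" and "s \<le> t"
  shows "((\<lambda>(l, \<nu>). \<integral>\<^sup>+ r\<in>{s..t}. opnormVE (\<lambda>v. rescaled A \<nu> l r v - Ahat \<mu> v) \<partial>lborel)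
           \<longlongrightarrow> 0) (at_right 0 \<times>\<^sub>F nhds \<mu>)"
proof -
  have "bounded_linear (Ahat \<mu>)"
  proof (rule bounded_linear_if_average_bounded[OF Ahat_lin])
    show "\<forall>\<^sub>F (T, \<nu>) in at_top \<times>\<^sub>F nhds \<mu>.
      ennreal (1 / T) * (\<integral>\<^sup>+ t\<in>{0..T}. opnormVE (\<lambda>v. A \<nu> t v - Ahat \<mu> v) \<partial>lborel) \<le> ennreal 1"
      using avg[OF zero_less_one, of \<mu>] by (rule eventually_mono) auto
  qed simp
  then obtain B where B: "Ahat \<mu> = blinfun_apply B"
    using bounded_linear_Blinfun_apply by metis
  have opnorm: "opnormVE (\<lambda>v. A \<nu> r v - Ahat \<mu> v) = ennreal (norm (A \<nu> r - B))" for \<nu> r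
  proof -
    have "(\<lambda>v. A \<nu> r v - Ahat \<mu> v) = blinfun_apply (A \<nu> r - B)"
      by (simp add: B fun_eq_iff blinfun.diff_left)
    then show ?thesis by (simp add: opnormVE_blinfun)
  qed
  have "((\<lambda>(l, \<nu>). \<integral>\<^sup>+ r\<in>{s..t}. ennreal (norm (A \<nu> (r / l) - B)) \<partial>lborel) \<longlongrightarrow> 0)
      (at_right 0 \<times>\<^sub>F nhds \<mu>)"
    using A_cont avg[of _ \<mu>] \<open>0 \<le> s\<close> \<open>s \<le> t\<close>
    by (intro tendsto_rescaled_norm_integral_0) (auto intro!: continuous_intros simp: opnorm)
  then show ?thesis by (simp add: opnorm rescaled_def)
qed

end
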